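(* Let $L\ge 1$ be an integer, let $\sigma^2>0$, and let $\bm{a}:[-1,1]\times[-1,1]\to\mathbb{C}^L$ be a function satisfying $\|\bm{a}(\omega,\mu)\|^2=L$ for all $(\omega,\mu)$. For parameters $x>0$, $\lambda\in[0,1]$, $(\omega,\mu)\in[-1,1]^2$ and $\psi\in[0,2\pi)$, consider the complex Gaussian density on $\mathbb{C}^L$ $$f(\bm{y}\mid x,\lambda,\omega,\mu,\psi)=\frac{1}{(\pi\epsilon^2)^L}\exp\!\Big(-\frac{\|\bm{y}-x\lambda\,\bm{a}(\omega,\mu)e^{\mathrm{j}\psi}\|^2}{\epsilon^2}\Big),\qquad \epsilon^2=x^2(1-\lambda^2)+\sigma^2,$$ i.e. the density of $\mathcal{CN}\big(x\lambda\bm{a}(\omega,\mu)e^{\mathrm{j}\psi},\,\epsilon^2\bm{I}_L\big)$. Fix an observation $\bm{y}\in\mathbb{C}^L$ and write $\bar{\bm{y}}=\bm{y}/\sqrt{L}$ and $\bar{\bm{a}}(\omega,\mu)=\bm{a}(\omega,\mu)/\sqrt{L}$. Let $(\omega_1^*,\mu_1^* )$ be a maximizer of $(\omega,\mu)\mapsto|\bar{\bm{y}}^H\bar{\bm{a}}(\omega,\mu)|^2$ over $[-1,1]^2$, assume $\bar{\bm{y}}^H\bar{\bm{a}}(\omega_1^*,\mu_1^* )\neq 0$, and set $\Xi^*=\|\bar{\bm{y}}\|^2-|\bar{\bm{y}}^H\bar{\bm{a}}(\omega_1^*,\mu_1^* )|^2-\sigma^2$. Define $x_1^*>0$, $\lambda_1^*\in[0,1]$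 and $\psi^*$ by $$(x_1^* )^2=\begin{cases}\|\bar{\bm{y}}\|^2-\sigma^2,&\Xi^*\ge 0,\\ |\bar{\bm{y}}^H\bar{\bm{a}}(\omega_1^*,\mu_1^* )|^2,&\Xi^*<0,\end{cases}\qquad (\lambda_1^* )^2=\begin{cases}\dfrac{|\bar{\bm{y}}^H\bar{\bm{a}}(\omega_1^*,\mu_1^* )|^2}{\|\bar{\bm{y}}\|^2-\sigma^2},&\Xi^*\ge 0,\\ 1,&\Xi^*<0,\end{cases}$$ $$e^{-\mathrm{j}\psi^*}=\frac{\bar{\bm{y}}^H\bar{\bm{a}}(\omega_1^*,\mu_1^* )}{|\bar{\bm{y}}^H\bar{\bm{a}}(\omega_1^*,\mu_1^* )|}.$$ Then $(x_1^*,\lambda_1^*,\omega_1^*,\mu_1^*,\psi^* )$ maximizes $\ln f(\bm{y}\mid x,\lambda,\omega,\mu,\psi)$ over all $x>0$, $\lambda\in[0,1]$, $(\omega,\mu)\in[-1,1]^2$, $\psi\in[0,2\pi)$.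
   Context: This is the maximum-likelihood estimation of the unknown parameters of a ground-to-air Rician channel under the hypothesis that the received (matched-filtered) training signal comes from an unknown attacker: $\bm{y}=x\,(\lambda\bm{a}(\omega,\mu)+\sqrt{1-\lambda^2}\,\bm{h})e^{\mathrm{j}\psi}+\bm{n}$ with $\bm{h}\sim\mathcal{CN}(\bm{0},\bm{I}_L)$ and $\bm{n}\sim\mathcal{CN}(\bm{0},\sigma^2\bm{I}_L)$ independent, which gives the density above. Here $\bm{a}(\omega,\mu)$ is the array steering vector, $\lambda=\sqrt{1/(1+\kappa)}$ with $\kappa$ the Rician factor, $x$ is the received amplitude, $\psi$ a phase rotation, and $(\cdot)^H$ denotes conjugate transpose. *)

theory Defs
  imports "HOL-Analysis.Analysis"
begin

text \<open>Vectors in C^L are modelled as complex^'n with L = CARD('n).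
  Hermitian inner product u^H v.\<close>
definition hprod :: "complex^'n \<Rightarrow> complex^'n \<Rightarrow> complex" where
  "hprod u v = (\<Sum>i\<in>UNIV. cnj (u $ i) * v $ i)"

definition rician_pdf ::
  "real \<Rightarrow> (real \<Rightarrow> real \<Rightarrow> complex^'n) \<Rightarrow> complex^'n \<Rightarrow> real \<Rightarrow> real \<Rightarrow> real \<Rightarrow> real \<Rightarrow> real \<Rightarrow> real" where
  "rician_pdf sigma2 a y x lam om mu psi =
     (let eps2 = x\<^sup>2 * (1 - lam\<^sup>2) + sigma2 in
      1 / (pi * eps2) ^ CARD('n) *
      exp (- (norm (y - (complex_of_real (x * lam) * exp (\<i> * complex_of_real psi)) *s a om mu))\<^sup>2 / eps2))"

end

theory Submission
  imports Defs
begin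

text \<open>With \<open>s = x \<lambda> e\<^sup>j\<^sup>\<psi>\<close> and \<open>\<epsilon>\<^sup>2 = x\<^sup>2 (1 - \<lambda>\<^sup>2) + \<sigma>\<^sup>2\<close>, the log-likelihood is
  \<open>-L ln (\<pi> \<epsilon>\<^sup>2) - \<parallel>y - s a\<parallel>\<^sup>2 / \<epsilon>\<^sup>2\<close>. Let \<open>c\<close> be the optimal normalised correlation.
  Since \<open>Re (s y\<^sup>H a) \<le> |s| |y\<^sup>H a| \<le> |s| L c\<close> by maximality of \<open>(\<omega>\<^sub>1\<^sup>*, \<mu>\<^sub>1\<^sup>*)\<close>, expanding
  the residual gives \<open>\<parallel>y - s a\<parallel>\<^sup>2 \<ge> L D + L (|s| - c)\<^sup>2 \<ge> L D\<close> with \<open>D = \<parallel>y\<parallel>\<^sup>2 / L - c\<^sup>2\<close>,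
  and equality holds when \<open>|s| = c\<close> and \<open>s\<close> undoes the phase of the correlation. It remains to
  minimise \<open>ln \<epsilon>\<^sup>2 + D / \<epsilon>\<^sup>2\<close> over \<open>\<epsilon>\<^sup>2 \<ge> \<sigma>\<^sup>2\<close>; the minimum is at \<open>max D \<sigma>\<^sup>2\<close>, which is
  exactly the noise level of the estimate.\<close>

lemma cmod_diff_mult_power2:
  fixes u s v :: complex
  shows "(cmod (u - s * v))\<^sup>2 = (cmod u)\<^sup>2 - 2 * Re (s * (cnj u * v)) + (cmod s)\<^sup>2 * (cmod v)\<^sup>2"
  unfolding cmod_power2 by (simp add: power2_eq_square algebra_simps)

lemma power2_norm_vec:
  "(norm (x :: 'a :: real_normed_vector ^ 'n))\<^sup>2 = (\<Sum>i\<in>UNIV. (norm (x $ i))\<^sup>2)"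
  unfolding norm_vec_def L2_set_def by (simp add: sum_nonneg)

lemma power2_norm_diff_scale:
  fixes y a :: "complex^'n"
  shows "(norm (y - s *s a))\<^sup>2 = (norm y)\<^sup>2 - 2 * Re (s * hprod y a) + (cmod s)\<^sup>2 * (norm a)\<^sup>2"
  unfolding power2_norm_vec hprod_def
  by (simp add: cmod_diff_mult_power2 sum_subtractf sum_distrib_left Re_sum sum.distrib)

lemma hprod_scaleR: "hprod (r *\<^sub>R u) (r *\<^sub>R v) = complex_of_real (r\<^sup>2) * hprod u v"
  unfolding hprod_def sum_distrib_left
  by (rule sum.cong)
    (simp_all only: vector_scaleR_component, simp add: scaleR_conv_of_real power2_eq_square)

lemma hprod_normalized:
  fixes u v :: "complex^'n"
  assumes "L \<ge> 0"
  shows "hprod ((1 / sqrt L) *\<^sub>R u) ((1 / sqrt L) *\<^sub>R v) = hprod u v / complex_of_real L"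
  using assms by (simp add: hprod_scaleR power_divide)

lemma power2_norm_residual_ge:
  fixes y a :: "complex^'n"
  assumes a_norm: "(norm a)\<^sup>2 = L" and corr: "cmod (hprod y a) \<le> L * c"
  shows "(norm y)\<^sup>2 - L * c\<^sup>2 \<le> (norm (y - s *s a))\<^sup>2"
proof -
  have "Re (s * hprod y a) \<le> cmod s * cmod (hprod y a)"
    using complex_Re_le_cmod by (metis norm_mult)
  also have "\<dots> \<le> cmod s * (L * c)"
    using corr by (simp add: mult_left_mono)
  finally have "(norm y)\<^sup>2 - L * c\<^sup>2 + L * (cmod s - c)\<^sup>2 \<le> (norm (y - s *s a))\<^sup>2"
    unfolding power2_norm_diff_scale a_norm by (simp add: power2_diff algebra_simps)
  moreover have "L * (cmod s - c)\<^sup>2 \<ge> 0"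
    using a_norm by (metis zero_le_power2 mult_nonneg_nonneg)
  ultimately show ?thesis
    by linarith
qed

lemma power2_norm_residual_eq:
  fixes y a :: "complex^'n"
  assumes "(norm a)\<^sup>2 = L" and "cmod s = \<bar>c\<bar>" and "s * hprod y a = complex_of_real (L * c\<^sup>2)"
  shows "(norm (y - s *s a))\<^sup>2 = (norm y)\<^sup>2 - L * c\<^sup>2"
  unfolding power2_norm_diff_scale assms by simp

text \<open>Both cases are \<open>ln t \<le> t - 1\<close> at \<open>t = max D s / e\<close>.\<close>
lemma ln_add_divide_min:
  fixes D s e :: real
  assumes s: "s > 0" and e: "e \<ge> s"
  shows "ln (max D s) + D / max D s \<le> ln e + D / e"
proof (cases "D \<ge> s")
  case True
  have "ln (D / e) \<le> D / e - 1"
    using True s e by (intro ln_le_minus_one) auto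
  with True s e show ?thesis by (simp add: ln_div)
next
  case False
  have ln_le: "ln (s / e) \<le> s / e - 1"
    using s e by (intro ln_le_minus_one) auto
  have "s / e - 1 + D / s - D / e = (s - e) * (s - D) / (e * s)"
    using s e by (simp add: field_simps)
  also have "\<dots> \<le> 0"
    using False s e by (intro divide_nonpos_pos mult_nonpos_nonneg) auto
  finally show ?thesis
    using ln_le False s e by (simp add: ln_div)
qed

lemma ln_rician_pdf:
  fixes a :: "real \<Rightarrow> real \<Rightarrow> complex^'n" and x lam sigma2 :: real
  defines "e \<equiv> x\<^sup>2 * (1 - lam\<^sup>2) + sigma2"
  assumes "e > 0"
  shows "ln (rician_pdf sigma2 a y x lam om mu psi) =
    - real CARD('n) * ln (pi * e)
    - (norm (y - (complex_of_real (x * lam) * exp (\<i> * complex_of_real psi)) *s a om mu))\<^sup>2 / e"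
  using assms unfolding rician_pdf_def Let_def by (simp add: ln_mult ln_div ln_realpow)

lemma ln_rician_pdf_le:
  fixes a :: "real \<Rightarrow> real \<Rightarrow> complex^'n" and y :: "complex^'n" and c :: real
  defines "L \<equiv> real CARD('n)"
  defines "D \<equiv> (norm y)\<^sup>2 / L - c\<^sup>2"
  assumes sigma: "sigma2 > 0" and lam: "lam \<in> {0..1}"
    and a_norm: "(norm (a om mu))\<^sup>2 = L" and corr: "cmod (hprod y (a om mu)) \<le> L * c"
  shows "ln (rician_pdf sigma2 a y x lam om mu psi) \<le>
    - L * ln (pi * max D sigma2) - L * D / max D sigma2"
proof -
  define e where "e = x\<^sup>2 * (1 - lam\<^sup>2) + sigma2"
  define s where "s = complex_of_real (x * lam) * exp (\<i> * complex_of_real psi)"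
  have "lam\<^sup>2 \<le> 1"
    using lam power_le_one[of lam 2] by simp
  then have e: "e \<ge> sigma2"
    unfolding e_def by simp
  have L: "L > 0"
    unfolding L_def by simp
  have "L * D \<le> (norm (y - s *s a om mu))\<^sup>2"
    using power2_norm_residual_ge[OF a_norm corr] L unfolding D_def by (simp add: algebra_simps)
  then have "(norm (y - s *s a om mu))\<^sup>2 / e \<ge> L * D / e"
    using e sigma by (simp add: divide_right_mono)
  then have "ln (rician_pdf sigma2 a y x lam om mu psi) \<le> - L * ln (pi * e) - L * D / e"
    using ln_rician_pdf[where a = a and x = x and lam = lam] e sigma
    unfolding e_def s_def L_def by simp
  also have "\<dots> \<le> - L * ln (pi * max D sigma2) - L * D / max D sigma2"
  proof -
    have "L * (ln (max D sigma2) + D / max D sigma2) \<le> L * (ln e + D / e)"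
      using ln_add_divide_min[OF sigma e] L by (simp add: mult_left_mono)
    then show ?thesis
      using e sigma by (simp add: ln_mult algebra_simps)
  qed
  finally show ?thesis .
qed

lemma ln_rician_pdf_attains:
  fixes a :: "real \<Rightarrow> real \<Rightarrow> complex^'n" and y :: "complex^'n" and c :: real
  defines "L \<equiv> real CARD('n)"
  defines "D \<equiv> (norm y)\<^sup>2 / L - c\<^sup>2"
  assumes sigma: "sigma2 > 0" and a_norm: "(norm (a om mu))\<^sup>2 = L"
    and amplitude: "x * lam = c" and noise: "x\<^sup>2 * (1 - lam\<^sup>2) + sigma2 = max D sigma2"
    and phase: "exp (\<i> * complex_of_real psi) * hprod y (a om mu) = complex_of_real (L * c)"
  shows "ln (rician_pdf sigma2 a y x lam om mu psi) =
    - L * ln (pi * max D sigma2) - L * D / max D sigma2"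
proof -
  define s where "s = complex_of_real (x * lam) * exp (\<i> * complex_of_real psi)"
  have "cmod s = \<bar>c\<bar>"
    unfolding s_def amplitude by (simp add: norm_mult)
  moreover have "s * hprod y (a om mu) = complex_of_real (L * c\<^sup>2)"
    unfolding s_def amplitude mult.assoc phase by (simp add: power2_eq_square)
  ultimately have "(norm (y - s *s a om mu))\<^sup>2 = (norm y)\<^sup>2 - L * c\<^sup>2"
    by (rule power2_norm_residual_eq[OF a_norm])
  also have "\<dots> = L * D"
    unfolding D_def L_def by (simp add: algebra_simps)
  finally have "(norm (y - s *s a om mu))\<^sup>2 = L * D" .
  moreover have "max D sigma2 > 0"
    using sigma by simp
  ultimately show ?thesis
    using ln_rician_pdf[where a = a and x = x and lam = lam] noise
    unfolding s_def L_def by simp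
qed

lemma rician_ml_estimate:
  fixes sigma2 c Y x1 lam1 :: real
  assumes c: "c > 0" and x1: "x1 > 0" and lam1: "lam1 \<in> {0..1}"
    and x1_sq: "x1\<^sup>2 = (if Y - c\<^sup>2 - sigma2 \<ge> 0 then Y - sigma2 else c\<^sup>2)"
    and lam1_sq: "lam1\<^sup>2 = (if Y - c\<^sup>2 - sigma2 \<ge> 0 then c\<^sup>2 / (Y - sigma2) else 1)"
  shows "x1 * lam1 = c" and "x1\<^sup>2 * (1 - lam1\<^sup>2) + sigma2 = max (Y - c\<^sup>2) sigma2"
proof -
  have "(x1 * lam1)\<^sup>2 = c\<^sup>2 \<and> x1\<^sup>2 * (1 - lam1\<^sup>2) + sigma2 = max (Y - c\<^sup>2) sigma2"
  proof (cases "Y - c\<^sup>2 - sigma2 \<ge> 0")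
    case True
    then have x1_sq': "x1\<^sup>2 = Y - sigma2" and lam1_sq': "lam1\<^sup>2 = c\<^sup>2 / (Y - sigma2)"
      using x1_sq lam1_sq by simp_all
    have "c\<^sup>2 > 0"
      using c by simp
    with True have "Y - sigma2 > 0"
      by linarith
    then have "(x1 * lam1)\<^sup>2 = c\<^sup>2" and "x1\<^sup>2 * (1 - lam1\<^sup>2) + sigma2 = Y - c\<^sup>2"
      unfolding power_mult_distrib x1_sq' lam1_sq' by (simp_all add: field_simps)
    then show ?thesis
      using True by simp
  next
    case False
    then show ?thesis
      using x1_sq lam1_sq by (simp add: power_mult_distrib)
  qed
  then show "x1 * lam1 = c" and "x1\<^sup>2 * (1 - lam1\<^sup>2) + sigma2 = max (Y - c\<^sup>2) sigma2"
    using x1 lam1 c by (auto intro: power2_eq_imp_eq)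
qed

lemma exp_phase_align:
  fixes z :: complex
  assumes "z \<noteq> 0" and "exp (- \<i> * complex_of_real psi) = z / complex_of_real (cmod z)"
  shows "exp (\<i> * complex_of_real psi) * z = complex_of_real (cmod z)"
proof -
  have "z = complex_of_real (cmod z) * exp (- \<i> * complex_of_real psi)"
    using assms by (simp add: field_simps)
  moreover have "exp (\<i> * complex_of_real psi) * exp (- \<i> * complex_of_real psi) = 1"
    by (simp add: exp_minus)
  ultimately show ?thesis
    by (metis mult.left_commute mult.right_neutral)
qed

theorem theorem1:
  fixes sigma2 :: real
    and a :: "real \<Rightarrow> real \<Rightarrow> complex^'n"
    and y :: "complex^'n"
    and om1 mu1 x1 lam1 psi1 :: real
  assumes sigma_pos: "sigma2 > 0"
    and a_norm: "\<And>om mu. om \<in> {-1..1} \<Longrightarrow> mu \<in> {-1..1} \<Longrightarrow> (norm (a om mu))\<^sup>2 = real CARD('n)"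
    and om1: "om1 \<in> {-1..1}" and mu1: "mu1 \<in> {-1..1}"
    and maxim: "\<And>om mu. om \<in> {-1..1} \<Longrightarrow> mu \<in> {-1..1} \<Longrightarrow>
        (cmod (hprod ((1 / sqrt (real CARD('n))) *\<^sub>R y) ((1 / sqrt (real CARD('n))) *\<^sub>R a om mu)))\<^sup>2
        \<le> (cmod (hprod ((1 / sqrt (real CARD('n))) *\<^sub>R y) ((1 / sqrt (real CARD('n))) *\<^sub>R a om1 mu1)))\<^sup>2"
    and nonzero: "hprod ((1 / sqrt (real CARD('n))) *\<^sub>R y) ((1 / sqrt (real CARD('n))) *\<^sub>R a om1 mu1) \<noteq> 0"
    and x1_pos: "x1 > 0"
    and lam1_range: "lam1 \<in> {0..1}"
    and x1_def: "x1\<^sup>2 = (let c = hprod ((1 / sqrt (real CARD('n))) *\<^sub>R y) ((1 / sqrt (real CARD('n))) *\<^sub>R a om1 mu1);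
                     Xi = (norm ((1 / sqrt (real CARD('n))) *\<^sub>R y))\<^sup>2 - (cmod c)\<^sup>2 - sigma2
                 in if Xi \<ge> 0 then (norm ((1 / sqrt (real CARD('n))) *\<^sub>R y))\<^sup>2 - sigma2 else (cmod c)\<^sup>2)"
    and lam1_def: "lam1\<^sup>2 = (let c = hprod ((1 / sqrt (real CARD('n))) *\<^sub>R y) ((1 / sqrt (real CARD('n))) *\<^sub>R a om1 mu1);
                     Xi = (norm ((1 / sqrt (real CARD('n))) *\<^sub>R y))\<^sup>2 - (cmod c)\<^sup>2 - sigma2
                 in if Xi \<ge> 0 then (cmod c)\<^sup>2 / ((norm ((1 / sqrt (real CARD('n))) *\<^sub>R y))\<^sup>2 - sigma2) else 1)"
    and psi1_range: "psi1 \<in> {0..<2 * pi}"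
    and psi1_def: "exp (- \<i> * complex_of_real psi1) =
          hprod ((1 / sqrt (real CARD('n))) *\<^sub>R y) ((1 / sqrt (real CARD('n))) *\<^sub>R a om1 mu1)
          / complex_of_real (cmod (hprod ((1 / sqrt (real CARD('n))) *\<^sub>R y) ((1 / sqrt (real CARD('n))) *\<^sub>R a om1 mu1)))"
  shows "\<forall>x lam om mu psi. x > 0 \<longrightarrow> lam \<in> {0..1} \<longrightarrow> om \<in> {-1..1} \<longrightarrow> mu \<in> {-1..1}
            \<longrightarrow> psi \<in> {0..<2 * pi} \<longrightarrow>
           ln (rician_pdf sigma2 a y x lam om mu psi) \<le> ln (rician_pdf sigma2 a y x1 lam1 om1 mu1 psi1)"
proof (intro allI impI)
  fix x lam om mu psi :: real
  assume "x > 0" and lam: "lam \<in> {0..1}" and om: "om \<in> {-1..1}" and mu: "mu \<in> {-1..1}"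
    and "psi \<in> {0..<2 * pi}"
  define L where "L = real CARD('n)"
  define c where "c = cmod (hprod y (a om1 mu1) / L)"
  define D where "D = (norm y)\<^sup>2 / L - c\<^sup>2"
  have L: "L > 0"
    unfolding L_def by simp
  have normalize:
    "hprod ((1 / sqrt L) *\<^sub>R y) ((1 / sqrt L) *\<^sub>R a om mu) = hprod y (a om mu) / L"
    "(norm ((1 / sqrt L) *\<^sub>R y))\<^sup>2 = (norm y)\<^sup>2 / L" for om mu
    using L by (simp_all add: hprod_normalized power_mult_distrib power_divide)
  note hyps = maxim nonzero x1_def lam1_def psi1_def
  note hyps = hyps[folded L_def, unfolded normalize Let_def]
  have "c > 0"
    using hyps(2) unfolding c_def by simp
  have "cmod (hprod y (a om mu)) \<le> L * c"
    using hyps(1)[OF om mu] L \<open>c > 0\<close>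
    unfolding c_def by (simp add: norm_divide abs_le_square_iff divide_le_cancel)
  then have upper: "ln (rician_pdf sigma2 a y x lam om mu psi) \<le>
      - L * ln (pi * max D sigma2) - L * D / max D sigma2"
    using ln_rician_pdf_le[OF sigma_pos lam] a_norm[OF om mu] unfolding D_def L_def by blast
  note estimate =
    rician_ml_estimate[OF \<open>c > 0\<close> x1_pos lam1_range hyps(3,4)[folded c_def]]
  have "exp (\<i> * complex_of_real psi1) * hprod y (a om1 mu1) = complex_of_real (L * c)"
    using exp_phase_align[OF hyps(2,5)] L unfolding c_def by (simp add: field_simps)
  then have "ln (rician_pdf sigma2 a y x1 lam1 om1 mu1 psi1) =
      - L * ln (pi * max D sigma2) - L * D / max D sigma2"
    using ln_rician_pdf_attains[where a = a and om = om1 and mu = mu1,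
        OF sigma_pos a_norm[OF om1 mu1] estimate[unfolded L_def]]
    unfolding D_def L_def by blast
  with upper show "ln (rician_pdf sigma2 a y x lam om mu psi) \<le>
      ln (rician_pdf sigma2 a y x1 lam1 om1 mu1 psi1)"
    by simp
qed

end
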